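(* For $n\ge 1$, $i\ge 1$, $j\ge 0$, the number of plane trees with $n$ edges, exactly $i$ old leaves and exactly $j$ young leaves is $$\frac{1}{n}\binom{n}{i}\binom{n-i}{j}\binom{n-i-j}{i-1}.$$
   Context: A plane tree is a rooted tree in which the children of each vertex are linearly ordered (left to right). A leaf is a vertex with no children; by convention the tree consisting of a single vertex (no edges) has no leaves. A leaf is an old leaf if it is the leftmost child of its parent, and a young leaf otherwise. *)

theory Defs
  imports Complex_Main
begin

datatype ptree = Node "ptree list"

fun edges :: "ptree \<Rightarrow> nat" where
  "edges (Node ts) = sum_list (map (\<lambda>t. Suc (edges t)) ts)"

text \<open>A leaf is a non-root vertex with no children; it is old if it is the
  leftmost child of its parent, young otherwise. The root is never a leaf.\<close>
fun old_leaves :: "ptree \<Rightarrow> nat" where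
  "old_leaves (Node ts) =
     (case ts of [] \<Rightarrow> 0 | t # _ \<Rightarrow> (if t = Node [] then 1 else 0))
     + sum_list (map old_leaves ts)"

fun young_leaves :: "ptree \<Rightarrow> nat" where
  "young_leaves (Node ts) =
     length (filter (\<lambda>t. t = Node []) (drop 1 ts))
     + sum_list (map young_leaves ts)"

end

theory Submission
  imports Defs "HOL-Combinatorics.Multiset_Permutations"
begin

(* Encode a tree by the word recording, for every non-root vertex, whether it is old or young
   and whether it is a leaf, listed in a suitable order. With weights old leaf -1, young leaf 0,
   old inner vertex 0, young inner vertex +1 the encoding is a bijection between trees with n
   edges, i old and j young leaves and Lukasiewicz words (total weight -1, every proper prefix of
   weight >= 0) of length n with i old and j young leaves, hence with i - 1 young inner vertices.
   By the cycle lemma exactly one of the n rotations of a word of total weight -1 is a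
   Lukasiewicz word, so these words are 1/n of all words with the given letter counts, of which
   there are n! / (i! j! (i-1)! (n-2i-j+1)!). *)

section \<open>Lukasiewicz words and the cycle lemma\<close>

definition lukasiewicz :: "int list \<Rightarrow> bool" where
  "lukasiewicz xs \<longleftrightarrow> sum_list xs = -1 \<and> (\<forall>k<length xs. 0 \<le> sum_list (take k xs))"

lemma lukasiewicz_not_Nil: "lukasiewicz xs \<Longrightarrow> xs \<noteq> []"
  by (auto simp: lukasiewicz_def)

lemma lukasiewicz_Cons_minus_one_iff: "lukasiewicz (-1 # xs) \<longleftrightarrow> xs = []"
  by (cases xs) (auto simp: lukasiewicz_def dest: spec[of _ 1])

lemma lukasiewicz_Cons_zero_iff: "lukasiewicz (0 # xs) \<longleftrightarrow> lukasiewicz xs"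
  by (simp add: lukasiewicz_def All_less_Suc2)

lemma lukasiewicz_Cons_one_append:
  assumes xs: "lukasiewicz xs" and ys: "lukasiewicz ys"
  shows "lukasiewicz (1 # xs @ ys)"
proof -
  have "0 \<le> 1 + (sum_list (take k xs) + sum_list (take (k - length xs) ys))"
    if "k < length xs + length ys" for k
  proof (cases "k < length xs")
    case True
    then show ?thesis using xs by (simp add: lukasiewicz_def)
  next
    case False
    then have "0 \<le> sum_list (take (k - length xs) ys)"
      using that ys by (simp add: lukasiewicz_def)
    then show ?thesis using False xs by (simp add: lukasiewicz_def)
  qed
  then show ?thesis using xs ys by (simp add: lukasiewicz_def All_less_Suc2)
qed

lemma lukasiewicz_append_cancel:
  assumes "lukasiewicz xs" "lukasiewicz xs'" "xs @ ys = xs' @ ys'"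
  shows "xs = xs'"
proof -
  have "xs = xs'"
    if "lukasiewicz xs" "lukasiewicz xs'" "xs @ ys = xs' @ ys'" "length xs \<le> length xs'"
    for xs ys xs' ys' :: "int list"
  proof -
    have "take (length xs) (xs @ ys) = take (length xs) (xs' @ ys')"
      using that(3) by simp
    then have prefix: "xs = take (length xs) xs'"
      using that(4) by simp
    show ?thesis
    proof (cases "length xs < length xs'")
      case True
      then show ?thesis using that(1,2) prefix by (auto simp: lukasiewicz_def)
    next
      case False
      then show ?thesis using that(4) prefix by simp
    qed
  qed
  then show ?thesis using assms by (metis nat_le_linear)
qed

lemma lukasiewicz_Cons_one_split:
  assumes w: "lukasiewicz (1 # zs)" and steps: "\<forall>z\<in>set zs. -1 \<le> z"
  obtains xs ys where "zs = xs @ ys" "lukasiewicz xs" "lukasiewicz ys"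
proof -
  define p where "p k = sum_list (take k zs)" for k
  have total: "p (length zs) = -2"
    using w by (simp add: p_def lukasiewicz_def)
  have lower: "-1 \<le> p s" if "s < length zs" for s
    using w that by (auto simp: p_def lukasiewicz_def All_less_Suc2)
  define k where "k = (LEAST k. p k < 0)"
  have "\<exists>k. p k < 0"
    using total by (intro exI[of _ "length zs"]) simp
  then have k_neg: "p k < 0"
    unfolding k_def by (rule LeastI_ex)
  have before_k: "0 \<le> p s" if "s < k" for s
    using not_less_Least[of s "\<lambda>k. p k < 0"] that by (simp add: k_def)
  have k_le: "k \<le> length zs"
    unfolding k_def using total by (simp add: Least_le)
  have "k \<noteq> 0"
    using k_neg by (cases k) (simp_all add: p_def)
  then obtain k' where k': "k = Suc k'"
    using not0_implies_Suc by blast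
  have "p k = p k' + zs ! k'"
    using k' k_le by (simp add: p_def take_Suc_conv_app_nth)
  moreover have "-1 \<le> zs ! k'"
    using steps k' k_le by simp
  ultimately have pk: "p k = -1"
    using k_neg before_k[of k'] k' by simp
  have k_less: "k < length zs"
    using k_le pk total by (cases "k = length zs") auto
  have "lukasiewicz (take k zs)"
    using pk before_k k_less by (simp add: lukasiewicz_def p_def min_def)
  moreover have "lukasiewicz (drop k zs)"
  proof -
    have split_sum: "p (k + t) = p k + sum_list (take t (drop k zs))" for t
      by (simp add: p_def take_add)
    have "sum_list (drop k zs) = -1"
      using split_sum[of "length zs - k"] pk total k_less by simp
    moreover have "0 \<le> sum_list (take t (drop k zs))" if "t < length zs - k" for t
    proof -
      have "-1 \<le> p (k + t)"
        using that by (intro lower) simp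
      then show ?thesis using split_sum[of t] pk by simp
    qed
    ultimately show ?thesis by (simp add: lukasiewicz_def)
  qed
  ultimately show ?thesis
    using that by (metis append_take_drop_id)
qed

lemma ex1_least_argmin:
  fixes f :: "nat \<Rightarrow> 'a::linorder"
  assumes "0 < n"
  shows "\<exists>!k. k < n \<and> (\<forall>s<n. f k \<le> f s) \<and> (\<forall>s<k. f k < f s)"
proof -
  define is_min where "is_min k \<longleftrightarrow> k < n \<and> (\<forall>s<n. f k \<le> f s)" for k
  have "is_min (arg_min_on f {..<n})"
    using arg_min_if_finite[of "{..<n}" f] assms by (auto simp: is_min_def not_less)
  then have "\<exists>k. is_min k" ..
  define k where "k = (LEAST k. is_min k)"
  have k: "is_min k"
    unfolding k_def using \<open>\<exists>k. is_min k\<close> by (rule LeastI_ex)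
  have before_k: "f k < f s" if "s < k" for s
  proof -
    have "\<not> is_min s"
      using not_less_Least[of s is_min] that by (simp add: k_def)
    moreover have "s < n"
      using k that by (simp add: is_min_def)
    ultimately obtain s' where "s' < n" "f s' < f s"
      by (auto simp: is_min_def not_le)
    moreover have "f k \<le> f s'"
      using k \<open>s' < n\<close> by (simp add: is_min_def)
    ultimately show ?thesis
      by (meson le_less_trans)
  qed
  show ?thesis
  proof (rule ex1I)
    show "k < n \<and> (\<forall>s<n. f k \<le> f s) \<and> (\<forall>s<k. f k < f s)"
      using k before_k by (simp add: is_min_def)
  next
    fix k' assume k': "k' < n \<and> (\<forall>s<n. f k' \<le> f s) \<and> (\<forall>s<k'. f k' < f s)"
    show "k' = k"
    proof (rule linorder_cases[of k' k])
      assume "k' < k"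
      then show ?thesis using before_k[of k'] k' k by (auto simp: is_min_def leD)
    next
      assume "k < k'"
      then show ?thesis using k k' by (auto simp: is_min_def leD)
    qed
  qed
qed

lemma rotate_eq_take_drop_append_self:
  assumes "k \<le> length xs"
  shows "rotate k xs = take (length xs) (drop k (xs @ xs))"
proof (cases "k = length xs")
  case False
  then show ?thesis using assms by (simp add: rotate_drop_take)
qed simp

lemma count_list_rotate: "count_list (rotate k w) x = count_list w x"
  by (simp add: rotate_drop_take) (metis add.commute append_take_drop_id count_list_append)

lemma all_less_shift_iff:
  fixes k n :: nat
  assumes "k < n"
  shows "(\<forall>t<n. P (k + t)) \<longleftrightarrow> (\<forall>s. k \<le> s \<and> s < n \<longrightarrow> P s) \<and> (\<forall>s<k. P (n + s))"
proof
  assume all: "\<forall>t<n. P (k + t)"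
  have "P s" if "k \<le> s" "s < n" for s
    using all[rule_format, of "s - k"] that by simp
  moreover have "P (n + s)" if "s < k" for s
    using all[rule_format, of "n - k + s"] that assms by simp
  ultimately show "(\<forall>s. k \<le> s \<and> s < n \<longrightarrow> P s) \<and> (\<forall>s<k. P (n + s))"
    by blast
next
  assume split: "(\<forall>s. k \<le> s \<and> s < n \<longrightarrow> P s) \<and> (\<forall>s<k. P (n + s))"
  show "\<forall>t<n. P (k + t)"
  proof (intro allI impI)
    fix t assume "t < n"
    then show "P (k + t)"
      using split[THEN conjunct2, rule_format, of "k + t - n"] split
      by (cases "k + t < n") auto
  qed
qed

text \<open>The prefix sums of \<open>rotate k xs\<close> are differences of prefix sums of the
  doubled word \<open>xs @ xs\<close>, whose second half lies one unit below the first.\<close>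

lemma lukasiewicz_rotate_iff:
  assumes total: "sum_list xs = -1" and k: "k < length xs"
  defines "p s \<equiv> sum_list (take s xs)"
  shows "lukasiewicz (rotate k xs) \<longleftrightarrow>
    (\<forall>s<length xs. p k \<le> p s) \<and> (\<forall>s<k. p k < p s)"
proof -
  define n where "n = length xs"
  define q where "q s = sum_list (take s (xs @ xs))" for s
  have q_low: "q s = p s" if "s \<le> n" for s
    using that by (simp add: q_def p_def n_def)
  have q_high: "q (n + s) = p s - 1" if "s \<le> n" for s
    using that total by (simp add: q_def p_def n_def)
  have prefix: "sum_list (take t (rotate k xs)) = q (k + t) - q k" if "t \<le> n" for t
    using that k by (simp add: rotate_eq_take_drop_append_self q_def take_add n_def add.commute)
  have "sum_list (rotate k xs) = -1"
    using prefix[of n] q_low[of k] q_high[of k] k by (simp add: n_def add.commute)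
  then have "lukasiewicz (rotate k xs) \<longleftrightarrow> (\<forall>t<n. q k \<le> q (k + t))"
    using prefix k by (auto simp: lukasiewicz_def n_def)
  also have "\<dots> \<longleftrightarrow> (\<forall>s. k \<le> s \<and> s < n \<longrightarrow> q k \<le> q s) \<and> (\<forall>s<k. q k \<le> q (n + s))"
    using k unfolding n_def by (rule all_less_shift_iff)
  also have "\<dots> \<longleftrightarrow> (\<forall>s. k \<le> s \<and> s < n \<longrightarrow> p k \<le> p s) \<and> (\<forall>s<k. p k < p s)"
    using k q_low q_high by (auto simp: n_def)
  also have "\<dots> \<longleftrightarrow> (\<forall>s<n. p k \<le> p s) \<and> (\<forall>s<k. p k < p s)"
    by (meson less_imp_le not_le)
  finally show ?thesis by (simp add: n_def)
qed

theorem cycle_lemma: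
  assumes "sum_list xs = -1"
  shows "\<exists>!k. k < length xs \<and> lukasiewicz (rotate k xs)"
proof -
  have "xs \<noteq> []" using assms by auto
  have "k < length xs \<and> lukasiewicz (rotate k xs) \<longleftrightarrow> k < length xs
    \<and> (\<forall>s<length xs. sum_list (take k xs) \<le> sum_list (take s xs))
    \<and> (\<forall>s<k. sum_list (take k xs) < sum_list (take s xs))" for k
    using lukasiewicz_rotate_iff[OF assms] by blast
  then show ?thesis
    using ex1_least_argmin[of "length xs" "\<lambda>s. sum_list (take s xs)"] \<open>xs \<noteq> []\<close> by simp
qed

lemma card_filter_rotate:
  assumes len: "\<And>w. w \<in> S \<Longrightarrow> length w = n"
    and closed: "\<And>w k. w \<in> S \<Longrightarrow> rotate k w \<in> S"
    and "k < n"
  shows "card {w \<in> S. P (rotate k w)} = card {w \<in> S. P w}"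
proof -
  have "inj (rotate k)"
    unfolding rotate_def by (intro inj_fn inj_rotate1)
  moreover have "rotate k ` {w \<in> S. P (rotate k w)} = {w \<in> S. P w}"
  proof (intro equalityI subsetI)
    fix v assume "v \<in> {w \<in> S. P w}"
    moreover have "rotate k (rotate (n - k) v) = v"
      using calculation len \<open>k < n\<close> by (simp add: rotate_rotate)
    ultimately show "v \<in> rotate k ` {w \<in> S. P (rotate k w)}"
      using closed by (metis (mono_tags, lifting) image_eqI mem_Collect_eq)
  qed (use closed in auto)
  ultimately show ?thesis
    by (metis card_image inj_on_subset subset_UNIV)
qed

lemma card_eq_mult_card_of_unique_rotation:
  assumes fin: "finite S" and len: "\<And>w. w \<in> S \<Longrightarrow> length w = n"
    and closed: "\<And>w k. w \<in> S \<Longrightarrow> rotate k w \<in> S"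
    and unique: "\<And>w. w \<in> S \<Longrightarrow> \<exists>!k. k < n \<and> P (rotate k w)"
  shows "card S = n * card {w \<in> S. P w}"
proof -
  have count: "card {x \<in> A. Q x} = (\<Sum>x\<in>A. if Q x then 1 else 0)" if "finite A" for A Q
    using that by (simp add: sum.inter_filter[symmetric])
  have one: "card {k. k < n \<and> P (rotate k w)} = 1" if w: "w \<in> S" for w
  proof -
    obtain k where "k < n \<and> P (rotate k w)" "\<forall>k'. k' < n \<and> P (rotate k' w) \<longrightarrow> k' = k"
      by (rule ex1E[OF unique[OF w]])
    then have "{k. k < n \<and> P (rotate k w)} = {k}" by blast
    then show ?thesis by simp
  qed
  have "card S = (\<Sum>w\<in>S. card {k. k < n \<and> P (rotate k w)})"
    using one by simp
  also have "\<dots> = (\<Sum>w\<in>S. \<Sum>k<n. if P (rotate k w) then 1 else 0)"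
    using count[of "{..<n}"] by (simp add: lessThan_def)
  also have "\<dots> = (\<Sum>k<n. \<Sum>w\<in>S. if P (rotate k w) then 1 else 0)"
    by (rule sum.swap)
  also have "\<dots> = (\<Sum>k<n. card {w \<in> S. P w})"
    using count[OF fin] card_filter_rotate[OF len closed] by simp
  finally show ?thesis by simp
qed

section \<open>Words with prescribed letter counts\<close>

lemma multinomial_fact_lemma:
  assumes "a + b + c \<le> n"
  shows "(n choose a) * ((n - a) choose b) * ((n - a - b) choose c)
           * (fact a * fact b * fact c * fact (n - a - b - c)) = (fact n :: nat)"
proof -
  have "(n choose a) * ((n - a) choose b) * ((n - a - b) choose c)
          * (fact a * fact b * fact c * fact (n - a - b - c))
        = fact a * (n choose a) * (fact b * ((n - a) choose b)
          * (fact c * fact (n - a - b - c) * ((n - a - b) choose c)))"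
    by (simp only: ac_simps)
  also have "fact c * fact (n - a - b - c) * ((n - a - b) choose c) = fact (n - a - b)"
    using assms by (intro binomial_fact_lemma) simp
  also have "fact b * ((n - a) choose b) * fact (n - a - b) = fact (n - a)"
    using assms binomial_fact_lemma[of b "n - a"] by (simp add: ac_simps)
  also have "fact a * (n choose a) * fact (n - a) = (fact n :: nat)"
    using assms binomial_fact_lemma[of a n] by (simp add: ac_simps)
  finally show ?thesis .
qed

datatype vertex_kind = OldLeaf | YoungLeaf | OldInner | YoungInner

lemma all_vertex_kind: "(\<forall>x. P x) \<longleftrightarrow> P OldLeaf \<and> P YoungLeaf \<and> P OldInner \<and> P YoungInner"
  by (metis vertex_kind.exhaust)

lemma UNIV_vertex_kind: "UNIV = {OldLeaf, YoungLeaf, OldInner, YoungInner}"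
  by (simp add: set_eq_iff all_vertex_kind)

instance vertex_kind :: finite
  by standard (simp add: UNIV_vertex_kind)

lemma length_eq_sum_count_list:
  "length w = count_list w OldLeaf + count_list w YoungLeaf + count_list w OldInner
     + count_list w YoungInner"
proof (induction w)
  case (Cons x w)
  then show ?case by (cases x) simp_all
qed simp

lemma card_words_with_counts:
  "card {w. length w = n \<and> count_list w OldLeaf = a \<and> count_list w YoungLeaf = b
            \<and> count_list w YoungInner = c}
     = (n choose a) * ((n - a) choose b) * ((n - a - b) choose c)"
  (is "card ?S = _")
proof (cases "a + b + c \<le> n")
  case True
  define d where "d = n - a - b - c"
  define M where "M = replicate_mset a OldLeaf + replicate_mset b YoungLeaf
    + replicate_mset d OldInner + replicate_mset c YoungInner"
  have count_M: "count M OldLeaf = a" "count M YoungLeaf = b" "count M OldInner = d"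
    "count M YoungInner = c"
    by (simp_all add: M_def)
  have mset_iff: "mset w = M \<longleftrightarrow> count_list w OldLeaf = a \<and> count_list w YoungLeaf = b
      \<and> count_list w OldInner = d \<and> count_list w YoungInner = c" for w
    by (simp add: multiset_eq_iff count_mset count_M all_vertex_kind)
  have "?S = permutations_of_multiset M"
    using True length_eq_sum_count_list
    by (auto simp: permutations_of_multiset_def mset_iff d_def)
  moreover have "(\<Prod>x\<in>set_mset M. fact (count M x)) = (fact a * fact b * fact c * fact d :: nat)"
  proof -
    have "(\<Prod>x\<in>set_mset M. fact (count M x)) = (\<Prod>x\<in>UNIV. fact (count M x) :: nat)"
      by (rule prod.mono_neutral_left) (auto simp: not_in_iff)
    then show ?thesis by (simp add: UNIV_vertex_kind count_M)
  qed
  moreover have "size M = n"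
    using True by (simp add: M_def d_def)
  ultimately have "card ?S * (fact a * fact b * fact c * fact d) = fact n"
    using card_permutations_of_multiset_aux[of M] by simp
  then have "card ?S * (fact a * fact b * fact c * fact d)
      = (n choose a) * ((n - a) choose b) * ((n - a - b) choose c)
        * (fact a * fact b * fact c * fact d)"
    using multinomial_fact_lemma[OF True] by (simp add: d_def)
  then show ?thesis by simp
next
  case False
  then have "?S = {}"
    using length_eq_sum_count_list by fastforce
  moreover have "(n choose a) * ((n - a) choose b) * ((n - a - b) choose c) = 0"
    using False by auto
  ultimately show ?thesis by (simp only: card.empty)
qed

definition vertex_kind_of :: "bool \<Rightarrow> bool \<Rightarrow> vertex_kind" where
  "vertex_kind_of first leaf =
     (if first then (if leaf then OldLeaf else OldInner) else (if leaf then YoungLeaf else YoungInner))"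

fun weight :: "vertex_kind \<Rightarrow> int" where
  "weight OldLeaf = -1"
| "weight YoungLeaf = 0"
| "weight OldInner = 0"
| "weight YoungInner = 1"

lemma weight_ge_minus_one: "-1 \<le> weight x"
  by (cases x) simp_all

lemma sum_list_map_weight:
  "sum_list (map weight w) = int (count_list w YoungInner) - int (count_list w OldLeaf)"
proof (induction w)
  case (Cons x w)
  then show ?case by (cases x) simp_all
qed simp

lemma card_words_eq_mult_card_lukasiewicz:
  assumes "0 < n" and "0 < i"
  shows "card {w. length w = n \<and> count_list w OldLeaf = i \<and> count_list w YoungLeaf = j
                  \<and> count_list w YoungInner = i - 1}
    = n * card {w. length w = n \<and> count_list w OldLeaf = i \<and> count_list w YoungLeaf = j
                  \<and> lukasiewicz (map weight w)}"
    (is "card ?W = n * card ?L")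
proof -
  have sum_weight: "sum_list (map weight w) = -1" if "w \<in> ?W" for w
    using that assms by (simp add: sum_list_map_weight)
  then have "?L = {w \<in> ?W. lukasiewicz (map weight w)}"
    using assms by (auto simp: sum_list_map_weight lukasiewicz_def)
  moreover have "card ?W = n * card {w \<in> ?W. lukasiewicz (map weight w)}"
  proof (rule card_eq_mult_card_of_unique_rotation)
    show "finite ?W"
      by (rule finite_subset[OF _ finite_lists_length_eq[OF finite_UNIV, of n]]) auto
    show "rotate k w \<in> ?W" if "w \<in> ?W" for w k
      using that by (simp add: count_list_rotate)
    show "\<exists>!k. k < n \<and> lukasiewicz (map weight (rotate k w))" if "w \<in> ?W" for w
      using cycle_lemma[OF sum_weight[OF that]] that by (simp add: rotate_map)
  qed simp
  ultimately show ?thesis by simp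
qed

section \<open>Encoding plane trees by Lukasiewicz words\<close>

fun children :: "ptree \<Rightarrow> ptree list" where
  "children (Node ts) = ts"

lemma Node_children [simp]: "Node (children t) = t"
  by (cases t) simp

lemma children_eq_Nil_iff [simp]: "children t = [] \<longleftrightarrow> t = Node []"
  by (cases t) simp

lemma edges_snoc: "edges (Node (ts @ [t])) = edges (Node ts) + Suc (edges t)"
  by (cases t) simp

lemma old_leaves_snoc:
  "old_leaves (Node (ts @ [t])) =
     old_leaves (Node ts) + old_leaves t + (if ts = [] \<and> t = Node [] then 1 else 0)"
  by (cases ts) auto

lemma young_leaves_snoc:
  "young_leaves (Node (ts @ [t])) =
     young_leaves (Node ts) + young_leaves t + (if ts \<noteq> [] \<and> t = Node [] then 1 else 0)"
  by (cases ts) auto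

text \<open>Splitting a forest into its last tree \<open>t\<close> and the forest \<open>ts\<close> before it views it as a
  binary tree with root \<open>t\<close>, left subtree \<open>ts\<close> and right subtree \<open>children t\<close>; \<open>code\<close> lists
  its vertices in preorder. The weight of a vertex is its number of nonempty binary subtrees
  minus one, so \<open>map weight \<circ> code\<close> is the Lukasiewicz code of that binary tree.\<close>

function code :: "ptree list \<Rightarrow> vertex_kind list" where
  "code ts = (if ts = [] then [] else
     vertex_kind_of (butlast ts = []) (last ts = Node [])
       # code (butlast ts) @ code (children (last ts)))"
  by pat_completeness auto
termination
proof (relation "measure (\<lambda>ts. edges (Node ts))")
  fix ts :: "ptree list"
  assume "ts \<noteq> []"
  then have "edges (Node ts) = edges (Node (butlast ts)) + Suc (edges (last ts))"
    by (metis append_butlast_last_id edges_snoc)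
  then show "(butlast ts, ts) \<in> measure (\<lambda>ts. edges (Node ts))"
    and "(children (last ts), ts) \<in> measure (\<lambda>ts. edges (Node ts))"
    by (simp_all del: edges.simps)
qed simp

declare code.simps [simp del]

lemma code_Nil [simp]: "code [] = []"
  by (simp add: code.simps)

lemma code_snoc [simp]:
  "code (ts @ [t]) = vertex_kind_of (ts = []) (t = Node []) # code ts @ code (children t)"
  by (subst code.simps) simp

lemma code_single [simp]: "code [t] = vertex_kind_of True (t = Node []) # code (children t)"
  using code_snoc[of "[]" t] by simp

lemma code_eq_Nil_iff [simp]: "code ts = [] \<longleftrightarrow> ts = []"
  by (cases ts rule: rev_exhaust) simp_all

lemma forest_snoc_induct [case_names Nil snoc]:
  assumes "P []" and "\<And>ts t. P ts \<Longrightarrow> P (children t) \<Longrightarrow> P (ts @ [t])"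
  shows "P ts"
  by (induction ts rule: code.induct) (metis assms append_butlast_last_id)

lemma length_code: "length (code ts) = edges (Node ts)"
  by (induction ts rule: forest_snoc_induct) (simp, simp add: edges_snoc del: edges.simps)

lemma count_list_code_OldLeaf: "count_list (code ts) OldLeaf = old_leaves (Node ts)"
  by (induction ts rule: forest_snoc_induct)
    (simp, simp add: old_leaves_snoc vertex_kind_of_def del: old_leaves.simps)

lemma count_list_code_YoungLeaf: "count_list (code ts) YoungLeaf = young_leaves (Node ts)"
  by (induction ts rule: forest_snoc_induct)
    (simp, simp add: young_leaves_snoc vertex_kind_of_def del: young_leaves.simps)

lemma lukasiewicz_code: "ts \<noteq> [] \<Longrightarrow> lukasiewicz (map weight (code ts))"
proof (induction ts rule: forest_snoc_induct)
  case (snoc ts t)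
  then show ?case
    by (cases "ts = []"; cases "t = Node []")
      (simp_all add: vertex_kind_of_def lukasiewicz_Cons_minus_one_iff lukasiewicz_Cons_zero_iff
        lukasiewicz_Cons_one_append)
qed simp

lemma code_inj: "code ts = code ts' \<Longrightarrow> ts = ts'"
proof (induction ts arbitrary: ts' rule: forest_snoc_induct)
  case Nil
  then show ?case by (metis code_eq_Nil_iff)
next
  case (snoc ts t)
  obtain us u where ts': "ts' = us @ [u]"
    using snoc.prems by (cases ts' rule: rev_exhaust) auto
  have "vertex_kind_of (ts = []) (t = Node []) = vertex_kind_of (us = []) (u = Node [])"
    and rest: "code ts @ code (children t) = code us @ code (children u)"
    using snoc.prems by (simp_all add: ts')
  then have first: "ts = [] \<longleftrightarrow> us = []"
    by (simp add: vertex_kind_of_def split: if_splits)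
  have "code ts = code us"
  proof (cases "ts = []")
    case False
    have "map weight (code ts) = map weight (code us)"
      using lukasiewicz_append_cancel[OF lukasiewicz_code lukasiewicz_code] rest first False
      by (metis map_append)
    then have "length (code ts) = length (code us)"
      by (metis length_map)
    then show ?thesis using rest by simp
  qed (use first in simp)
  then have "ts = us" and "children t = children u"
    using snoc.IH rest by simp_all
  then show ?case
    by (metis Node_children ts')
qed

lemma code_surj: "lukasiewicz (map weight w) \<Longrightarrow> \<exists>ts. code ts = w"
proof (induction "length w" arbitrary: w rule: less_induct)
  case less
  obtain x v where w: "w = x # v"
    using lukasiewicz_not_Nil[OF less.prems] by (cases w) auto
  have IH: "\<exists>ts. code ts = u" if "lukasiewicz (map weight u)" "length u < length w" for u
    using less.hyps that by blast
  show ?case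
  proof (cases x)
    case OldLeaf
    then have "v = []"
      using less.prems w by (simp add: lukasiewicz_Cons_minus_one_iff)
    then show ?thesis
      using OldLeaf w by (intro exI[of _ "[Node []]"]) (simp add: vertex_kind_of_def)
  next
    case OldInner
    then obtain ts where "code ts = v" "v \<noteq> []"
      using less.prems w IH[of v] lukasiewicz_not_Nil
      by (auto simp: lukasiewicz_Cons_zero_iff)
    then show ?thesis
      using OldInner w by (intro exI[of _ "[Node ts]"]) (auto simp: vertex_kind_of_def)
  next
    case YoungLeaf
    then obtain ts where "code ts = v" "v \<noteq> []"
      using less.prems w IH[of v] lukasiewicz_not_Nil
      by (auto simp: lukasiewicz_Cons_zero_iff)
    then show ?thesis
      using YoungLeaf w by (intro exI[of _ "ts @ [Node []]"]) (auto simp: vertex_kind_of_def)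
  next
    case YoungInner
    then have "lukasiewicz (1 # map weight v)"
      using less.prems w by simp
    then obtain xs ys where "map weight v = xs @ ys" "lukasiewicz xs" "lukasiewicz ys"
      by (rule lukasiewicz_Cons_one_split) (simp add: weight_ge_minus_one)
    then obtain u u' where v: "v = u @ u'"
      and "lukasiewicz (map weight u)" "lukasiewicz (map weight u')"
      by (auto simp: map_eq_append_conv)
    then obtain ts ts' where "code ts = u" "code ts' = u'" "u \<noteq> []" "u' \<noteq> []"
      using IH[of u] IH[of u'] w lukasiewicz_not_Nil by force
    then show ?thesis
      using YoungInner w v by (intro exI[of _ "ts @ [Node ts']"]) (auto simp: vertex_kind_of_def)
  qed
qed

lemma bij_betw_code_children:
  assumes "0 < n"
  shows "bij_betw (\<lambda>t. code (children t))
    {t. edges t = n \<and> old_leaves t = i \<and> young_leaves t = j}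
    {w. length w = n \<and> count_list w OldLeaf = i \<and> count_list w YoungLeaf = j
        \<and> lukasiewicz (map weight w)}"
    (is "bij_betw ?f ?T ?L")
  unfolding bij_betw_def
proof (intro conjI equalityI subsetI)
  show "inj_on ?f ?T"
    by (intro inj_onI) (metis Node_children code_inj)
next
  fix w assume "w \<in> ?f ` ?T"
  then obtain t where t: "edges t = n" "old_leaves t = i" "young_leaves t = j"
    and w: "w = code (children t)"
    by blast
  have "children t \<noteq> []"
    using t(1) assms by (cases t) auto
  then show "w \<in> ?L"
    using t w length_code count_list_code_OldLeaf count_list_code_YoungLeaf lukasiewicz_code
    by (metis (mono_tags, lifting) Node_children mem_Collect_eq)
next
  fix w assume "w \<in> ?L"
  then have w: "length w = n" "count_list w OldLeaf = i" "count_list w YoungLeaf = j"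
    "lukasiewicz (map weight w)"
    by auto
  obtain ts where "code ts = w"
    using code_surj[OF w(4)] by blast
  then show "w \<in> ?f ` ?T"
    using w length_code[of ts] count_list_code_OldLeaf[of ts] count_list_code_YoungLeaf[of ts]
    by (intro image_eqI[of _ _ "Node ts"])
      (simp_all del: edges.simps old_leaves.simps young_leaves.simps)
qed

theorem mainTheorem2:
  fixes n i j :: nat
  assumes "n \<ge> 1" and "i \<ge> 1"
  shows "real (card {t. edges t = n \<and> old_leaves t = i \<and> young_leaves t = j})
         = (1 / real n) * real (n choose i) * real ((n - i) choose j)
             * real ((n - i - j) choose (i - 1))"
proof -
  have "card {t. edges t = n \<and> old_leaves t = i \<and> young_leaves t = j}
    = card {w. length w = n \<and> count_list w OldLeaf = i \<and> count_list w YoungLeaf = j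
             \<and> lukasiewicz (map weight w)}"
    by (rule bij_betw_same_card[OF bij_betw_code_children]) (use assms in simp)
  also have "n * \<dots> = (n choose i) * ((n - i) choose j) * ((n - i - j) choose (i - 1))"
    using assms card_words_eq_mult_card_lukasiewicz[of n i j]
      card_words_with_counts[of n i j "i - 1"]
    by simp
  finally show ?thesis
    using assms by (simp add: field_simps flip: of_nat_mult)
qed

end
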